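(* Consider the noisy Hegselmann–Krause model with heterogeneously prejudiced agents described in the context, with noise bound $\delta>0$ and $J_1-J_2>\epsilon+2R$, where $R=\frac{(1-\alpha)\epsilon+\delta}{\alpha}$. Suppose $\max_{i\in\mathcal{S}_1}|x_i(0)-J_1|\le R$ and $\max_{i\in\mathcal{S}_2}|x_i(0)-J_2|\le R$. If almost surely there is a finite (possibly random) time $T$ with $\max_{i\in\mathcal{S}_1}|x_i(T)-J_1|\le\frac{\delta}{\alpha}$, then almost surely $\limsup_{t\to\infty}\max_{i\in\mathcal{S}_1}|x_i(t)-J_1|\le\frac{\delta}{\alpha}$. Likewise, if almost surely there is a finite time $T$ with $\max_{i\in\mathcal{S}_2}|x_i(T)-J_2|\le\frac{\delta}{\alpha}$, then almost surely $\limsup_{t\to\infty}\max_{i\in\mathcal{S}_2}|x_i(t)-J_2|\le\frac{\delta}{\alpha}$.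
   Context: Agents $\mathcal{V}=\{1,\dots,n\}$ with opinions $x_i(t)\in[0,1]$, $t=0,1,2,\dots$. $\mathcal{V}=\mathcal{S}_1\cup\mathcal{S}_2$ with $\mathcal{S}_1\cap\mathcal{S}_2=\emptyset$; agents in $\mathcal{S}_k$ have prejudice value $J_k\in[0,1]$ ($k=1,2$). Confidence bound $\epsilon\in(0,1)$, attraction strength $\alpha\in(0,1]$. Neighbor set $\mathcal{N}_i(x(t))=\{j\in\mathcal{V}:|x_j(t)-x_i(t)|\le\epsilon\}$. For $i\in\mathcal{S}_k$, $x_i^*(t)=(1-\alpha)|\mathcal{N}_i(x(t))|^{-1}\sum_{j\in\mathcal{N}_i(x(t))}x_j(t)+\alpha J_k+\xi_i(t+1)$, and $x_i(t+1)$ equals $1$ if $x_i^*(t)>1$, $x_i^*(t)$ if $x_i^*(t)\in[0,1]$, $0$ if $x_i^*(t)<0$. The noises $\{\xi_i(t)\}_{i\in\mathcal{V},t\ge1}$ are i.i.d. with $E\xi_1(1)=0$, $E\xi_1(1)^2>0$ and $|\xi_1(1)|\le\delta$ almost surely. *)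

theory Defs
  imports "HOL-Probability.Probability"
begin

definition hk_neighbors :: "real \<Rightarrow> ('v \<Rightarrow> real) \<Rightarrow> 'v \<Rightarrow> 'v set" where
  "hk_neighbors eps x i = {j. \<bar>x j - x i\<bar> \<le> eps}"

definition clip01 :: "real \<Rightarrow> real" where
  "clip01 y = (if y > 1 then 1 else if y < 0 then 0 else y)"

definition hk_step :: "real \<Rightarrow> real \<Rightarrow> ('v \<Rightarrow> real) \<Rightarrow> ('v \<Rightarrow> real) \<Rightarrow> ('v \<Rightarrow> real) \<Rightarrow> 'v \<Rightarrow> real" where
  "hk_step eps alpha J x w i =
     clip01 ((1 - alpha) * (\<Sum>j\<in>hk_neighbors eps x i. x j) / real (card (hk_neighbors eps x i))
             + alpha * J i + w i)"

fun hk_traj :: "real \<Rightarrow> real \<Rightarrow> ('v \<Rightarrow> real) \<Rightarrow> ('v \<Rightarrow> real) \<Rightarrow> ('v \<Rightarrow> nat \<Rightarrow> 'a \<Rightarrow> real)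
                 \<Rightarrow> nat \<Rightarrow> 'a \<Rightarrow> 'v \<Rightarrow> real" where
  "hk_traj eps alpha J x0 xi 0 \<omega> = x0"
| "hk_traj eps alpha J x0 xi (Suc t) \<omega> =
     hk_step eps alpha J (hk_traj eps alpha J x0 xi t \<omega>) (\<lambda>i. xi i (Suc t) \<omega>)"

end

theory Submission
  imports Defs
begin

text \<open>Of the noise assumptions only the almost sure bound \<open>\<bar>xi\<bar> \<le> delta\<close> matters: the
  argument is pathwise on the event that all noises are bounded by \<open>delta\<close>.
  If the two clusters sit within \<open>a\<close> resp. \<open>b\<close> of their prejudices and
  \<open>\<bar>J\<^sub>A - J\<^sub>B\<bar> > eps + a + b\<close>, no agent sees the other cluster, so an agent's
  neighbourhood average stays within \<open>a\<close> of its prejudice and one step yields the bound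
  \<open>(1 - alpha) a + delta\<close>. Radii with \<open>(1 - alpha) r + delta \<le> r\<close> are therefore
  invariant; both \<open>R\<close> and \<open>delta / alpha\<close> (the fixed point) are such radii, so the
  \<open>R\<close>-bounds hold forever, and once a cluster enters the \<open>delta / alpha\<close>-ball it never
  leaves it.\<close>

lemma clip01_dist_le: "c \<in> {0..1} \<Longrightarrow> \<bar>clip01 y - c\<bar> \<le> \<bar>y - c\<bar>"
  by (auto simp: clip01_def)

lemma self_mem_hk_neighbors: "0 \<le> eps \<Longrightarrow> i \<in> hk_neighbors eps x i"
  by (simp add: hk_neighbors_def)

lemma hk_neighbors_subset_cluster:
  assumes "A \<union> B = UNIV" "i \<in> A"
    and "\<forall>j\<in>A. \<bar>x j - cA\<bar> \<le> a" "\<forall>j\<in>B. \<bar>x j - cB\<bar> \<le> b"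
    and "\<bar>cA - cB\<bar> > eps + a + b"
  shows "hk_neighbors eps x i \<subseteq> A"
proof
  fix j assume j: "j \<in> hk_neighbors eps x i"
  show "j \<in> A"
  proof (rule ccontr)
    assume "j \<notin> A"
    then have "\<bar>x j - cB\<bar> \<le> b" using assms(1,4) by auto
    moreover have "\<bar>x i - cA\<bar> \<le> a" using assms(2,3) by auto
    moreover have "\<bar>x j - x i\<bar> \<le> eps" using j by (simp add: hk_neighbors_def)
    ultimately show False using assms(5) by linarith
  qed
qed

lemma mean_dist_le:
  fixes f :: "'v \<Rightarrow> real"
  assumes "finite N" "N \<noteq> {}" "\<forall>j\<in>N. \<bar>f j - c\<bar> \<le> a"
  shows "\<bar>(\<Sum>j\<in>N. f j) / real (card N) - c\<bar> \<le> a"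
proof -
  have n: "real (card N) > 0" using assms(1,2) by (simp add: card_gt_0_iff)
  have "\<bar>(\<Sum>j\<in>N. f j) - real (card N) * c\<bar> = \<bar>\<Sum>j\<in>N. f j - c\<bar>"
    by (simp add: sum_subtractf)
  also have "\<dots> \<le> (\<Sum>j\<in>N. \<bar>f j - c\<bar>)" by (rule sum_abs)
  also have "\<dots> \<le> real (card N) * a" using sum_mono[of N _ "\<lambda>_. a"] assms(3) by simp
  finally have "\<bar>(\<Sum>j\<in>N. f j) - real (card N) * c\<bar> / real (card N) \<le> a"
    using n by (simp add: divide_le_eq mult.commute)
  moreover have "(\<Sum>j\<in>N. f j) / real (card N) - c = ((\<Sum>j\<in>N. f j) - real (card N) * c) / real (card N)"
    using n by (simp add: field_simps)
  ultimately show ?thesis by simp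
qed

lemma hk_step_cluster_dist_le:
  fixes x w :: "'v::finite \<Rightarrow> real"
  assumes AB: "A \<union> B = UNIV" and i: "i \<in> A"
    and cA: "cA \<in> {0..1}" "\<forall>j\<in>A. J j = cA"
    and alpha: "0 < alpha" "alpha \<le> 1" and eps: "0 \<le> eps"
    and xA: "\<forall>j\<in>A. \<bar>x j - cA\<bar> \<le> a" and xB: "\<forall>j\<in>B. \<bar>x j - cB\<bar> \<le> b"
    and sep: "\<bar>cA - cB\<bar> > eps + a + b"
    and w: "\<bar>w i\<bar> \<le> delta"
  shows "\<bar>hk_step eps alpha J x w i - cA\<bar> \<le> (1 - alpha) * a + delta"
proof -
  let ?N = "hk_neighbors eps x i"
  let ?m = "(\<Sum>j\<in>?N. x j) / real (card ?N)"
  have "?N \<subseteq> A" using hk_neighbors_subset_cluster[OF AB i xA xB sep] .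
  then have m: "\<bar>?m - cA\<bar> \<le> a"
    using xA self_mem_hk_neighbors[OF eps, where x=x and i=i] by (intro mean_dist_le) auto
  have "(1 - alpha) * (\<Sum>j\<in>?N. x j) / real (card ?N) + alpha * J i + w i - cA
        = (1 - alpha) * (?m - cA) + w i"
    using cA(2) i by (simp add: algebra_simps)
  also have "\<bar>\<dots>\<bar> \<le> (1 - alpha) * \<bar>?m - cA\<bar> + \<bar>w i\<bar>"
    using alpha abs_triangle_ineq[of "(1 - alpha) * (?m - cA)" "w i"] by (simp add: abs_mult)
  also have "\<dots> \<le> (1 - alpha) * a + delta"
    using m alpha w by (intro add_mono mult_left_mono) auto
  finally show ?thesis
    unfolding hk_step_def using clip01_dist_le[OF cA(1)] order_trans by blast
qed

lemma hk_traj_cluster_bounds_persist: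
  fixes x0 :: "'v::finite \<Rightarrow> real"
  assumes AB: "A \<union> B = UNIV"
    and cA: "cA \<in> {0..1}" "\<forall>j\<in>A. J j = cA"
    and cB: "cB \<in> {0..1}" "\<forall>j\<in>B. J j = cB"
    and alpha: "0 < alpha" "alpha \<le> 1" and eps: "0 \<le> eps"
    and noise: "\<forall>t i. \<bar>xi i (Suc t) \<omega>\<bar> \<le> delta"
    and a: "(1 - alpha) * a + delta \<le> a" and b: "(1 - alpha) * b + delta \<le> b"
    and sep: "\<bar>cA - cB\<bar> > eps + a + b"
    and start: "\<forall>j\<in>A. \<bar>hk_traj eps alpha J x0 xi T \<omega> j - cA\<bar> \<le> a"
               "\<forall>j\<in>B. \<bar>hk_traj eps alpha J x0 xi T \<omega> j - cB\<bar> \<le> b"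
    and "T \<le> t"
  shows "(\<forall>j\<in>A. \<bar>hk_traj eps alpha J x0 xi t \<omega> j - cA\<bar> \<le> a)
       \<and> (\<forall>j\<in>B. \<bar>hk_traj eps alpha J x0 xi t \<omega> j - cB\<bar> \<le> b)"
  using \<open>T \<le> t\<close>
proof (induction t rule: dec_induct)
  case base
  then show ?case using start by blast
next
  case (step t)
  have BA: "B \<union> A = UNIV" using AB by auto
  have sep': "\<bar>cB - cA\<bar> > eps + b + a" using sep by linarith
  let ?x = "hk_traj eps alpha J x0 xi t \<omega>" and ?w = "\<lambda>i. xi i (Suc t) \<omega>"
  have IH: "\<forall>j\<in>A. \<bar>?x j - cA\<bar> \<le> a" "\<forall>j\<in>B. \<bar>?x j - cB\<bar> \<le> b"
    using step.IH by blast+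
  have "\<bar>hk_step eps alpha J ?x ?w j - cA\<bar> \<le> a" if "j \<in> A" for j
    using hk_step_cluster_dist_le[OF AB that cA alpha eps IH sep, of ?w delta] noise a by simp
  moreover have "\<bar>hk_step eps alpha J ?x ?w j - cB\<bar> \<le> b" if "j \<in> B" for j
    using hk_step_cluster_dist_le[OF BA that cB alpha eps IH(2,1) sep', of ?w delta] noise b by simp
  ultimately show ?case by simp
qed

lemma hk_traj_limsup_cluster_dist_le:
  fixes x0 :: "'v::finite \<Rightarrow> real"
  assumes AB: "A \<union> B = UNIV" and ne: "A \<noteq> {}" "B \<noteq> {}"
    and cA: "cA \<in> {0..1}" "\<forall>j\<in>A. J j = cA"
    and cB: "cB \<in> {0..1}" "\<forall>j\<in>B. J j = cB"
    and alpha: "0 < alpha" "alpha \<le> 1" and eps: "0 \<le> eps" and delta: "0 \<le> delta"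
    and noise: "\<forall>t i. \<bar>xi i (Suc t) \<omega>\<bar> \<le> delta"
    and R: "(1 - alpha) * R + delta \<le> R" "delta / alpha \<le> R"
    and sep: "\<bar>cA - cB\<bar> > eps + 2 * R"
    and init: "Max ((\<lambda>j. \<bar>x0 j - cA\<bar>) ` A) \<le> R" "Max ((\<lambda>j. \<bar>x0 j - cB\<bar>) ` B) \<le> R"
    and T: "Max ((\<lambda>j. \<bar>hk_traj eps alpha J x0 xi T \<omega> j - cA\<bar>) ` A) \<le> delta / alpha"
  shows "limsup (\<lambda>t. ereal (Max ((\<lambda>j. \<bar>hk_traj eps alpha J x0 xi t \<omega> j - cA\<bar>) ` A)))
         \<le> ereal (delta / alpha)"
proof -
  let ?x = "hk_traj eps alpha J x0 xi"
  have B_R: "\<forall>j\<in>B. \<bar>?x t \<omega> j - cB\<bar> \<le> R" for t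
    using hk_traj_cluster_bounds_persist[where xi=xi and \<omega>=\<omega> and T=0,
          OF AB cA cB alpha eps noise R(1) R(1)] sep init ne
    by (simp add: Max_le_iff)
  have fixed_point: "(1 - alpha) * (delta / alpha) + delta \<le> delta / alpha"
    using alpha by (simp add: field_simps)
  have "\<forall>j\<in>A. \<bar>?x t \<omega> j - cA\<bar> \<le> delta / alpha" if "T \<le> t" for t
    using hk_traj_cluster_bounds_persist[where xi=xi and \<omega>=\<omega>,
          OF AB cA cB alpha eps noise fixed_point R(1) _ _ B_R that] sep R T ne
    by (simp add: Max_le_iff)
  then have "eventually (\<lambda>t. ereal (Max ((\<lambda>j. \<bar>?x t \<omega> j - cA\<bar>) ` A)) \<le> ereal (delta / alpha))
               sequentially"
    using ne by (auto simp: eventually_sequentially Max_le_iff)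
  then show ?thesis by (rule Limsup_bounded)
qed

theorem lemma4:
  fixes M :: "'a measure"
    and S1 S2 :: "'v::finite set"
    and J1 J2 eps alpha delta R :: real
    and x0 :: "'v \<Rightarrow> real"
    and xi :: "'v \<Rightarrow> nat \<Rightarrow> 'a \<Rightarrow> real"
    and x :: "nat \<Rightarrow> 'a \<Rightarrow> 'v \<Rightarrow> real"
  assumes M: "prob_space M"
    and part: "S1 \<union> S2 = UNIV" "S1 \<inter> S2 = {}"
    and nonempty: "S1 \<noteq> {}" "S2 \<noteq> {}"
    and J: "J1 \<in> {0..1}" "J2 \<in> {0..1}"
    and eps: "0 < eps" "eps < 1"
    and alpha: "0 < alpha" "alpha \<le> 1"
    and x0: "\<forall>i. x0 i \<in> {0..1}"
    and meas: "\<forall>i t. 1 \<le> t \<longrightarrow> xi i t \<in> borel_measurable M"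
    and indep: "prob_space.indep_vars M (\<lambda>_. borel) (\<lambda>p. xi (fst p) (snd p)) (UNIV \<times> {1..})"
    and ident: "\<forall>i j s t. 1 \<le> s \<longrightarrow> 1 \<le> t \<longrightarrow> distr M borel (xi i s) = distr M borel (xi j t)"
    and mean0: "\<forall>i t. 1 \<le> t \<longrightarrow> integrable M (xi i t) \<and> integral\<^sup>L M (xi i t) = 0"
    and var_pos: "\<forall>i t. 1 \<le> t \<longrightarrow> integral\<^sup>L M (\<lambda>\<omega>. (xi i t \<omega>)^2) > 0"
    and delta: "0 < delta"
    and bounded: "\<forall>i t. 1 \<le> t \<longrightarrow> (AE \<omega> in M. \<bar>xi i t \<omega>\<bar> \<le> delta)"
    and R_def: "R = ((1 - alpha) * eps + delta) / alpha"
    and sep: "J1 - J2 > eps + 2 * R"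
    and x_def: "x = hk_traj eps alpha (\<lambda>i. if i \<in> S1 then J1 else J2) x0 xi"
    and init1: "Max ((\<lambda>i. \<bar>x0 i - J1\<bar>) ` S1) \<le> R"
    and init2: "Max ((\<lambda>i. \<bar>x0 i - J2\<bar>) ` S2) \<le> R"
  shows "((AE \<omega> in M. \<exists>T. Max ((\<lambda>i. \<bar>x T \<omega> i - J1\<bar>) ` S1) \<le> delta / alpha)
            \<longrightarrow> (AE \<omega> in M. limsup (\<lambda>t. ereal (Max ((\<lambda>i. \<bar>x t \<omega> i - J1\<bar>) ` S1)))
                               \<le> ereal (delta / alpha)))
       \<and> ((AE \<omega> in M. \<exists>T. Max ((\<lambda>i. \<bar>x T \<omega> i - J2\<bar>) ` S2) \<le> delta / alpha)
            \<longrightarrow> (AE \<omega> in M. limsup (\<lambda>t. ereal (Max ((\<lambda>i. \<bar>x t \<omega> i - J2\<bar>) ` S2)))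
                               \<le> ereal (delta / alpha)))"
proof -
  have AE_noise: "AE \<omega> in M. \<forall>t i. \<bar>xi i (Suc t) \<omega>\<bar> \<le> delta"
    using bounded by (simp add: AE_all_countable AE_finite_all)
  have "alpha * R = (1 - alpha) * eps + delta" using R_def alpha by simp
  then have "delta \<le> alpha * R" using alpha eps by simp
  then have R: "(1 - alpha) * R + delta \<le> R" "delta / alpha \<le> R"
    using alpha by (simp_all add: algebra_simps pos_divide_le_eq mult.commute)
  have sep': "\<bar>J1 - J2\<bar> > eps + 2 * R" "\<bar>J2 - J1\<bar> > eps + 2 * R" using sep by auto
  have J_S1: "\<forall>j\<in>S1. (if j \<in> S1 then J1 else J2) = J1"
    and J_S2: "\<forall>j\<in>S2. (if j \<in> S1 then J1 else J2) = J2"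
    using part(2) by auto
  have S21: "S2 \<union> S1 = UNIV" using part(1) by auto
  have limsup1: "limsup (\<lambda>t. ereal (Max ((\<lambda>i. \<bar>x t \<omega> i - J1\<bar>) ` S1))) \<le> ereal (delta / alpha)"
    if "\<forall>t i. \<bar>xi i (Suc t) \<omega>\<bar> \<le> delta"
      and "Max ((\<lambda>i. \<bar>x T \<omega> i - J1\<bar>) ` S1) \<le> delta / alpha" for \<omega> T
    using hk_traj_limsup_cluster_dist_le[where xi=xi and \<omega>=\<omega>, OF part(1) nonempty J(1) J_S1 J(2) J_S2 alpha _ _ that(1)
          R sep'(1) init1 init2] that(2) eps delta unfolding x_def by simp
  have limsup2: "limsup (\<lambda>t. ereal (Max ((\<lambda>i. \<bar>x t \<omega> i - J2\<bar>) ` S2))) \<le> ereal (delta / alpha)"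
    if "\<forall>t i. \<bar>xi i (Suc t) \<omega>\<bar> \<le> delta"
      and "Max ((\<lambda>i. \<bar>x T \<omega> i - J2\<bar>) ` S2) \<le> delta / alpha" for \<omega> T
    using hk_traj_limsup_cluster_dist_le[where xi=xi and \<omega>=\<omega>, OF S21 nonempty(2,1) J(2) J_S2 J(1) J_S1 alpha _ _ that(1)
          R sep'(2) init2 init1] that(2) eps delta unfolding x_def by simp
  show ?thesis
  proof (intro conjI impI)
    assume "AE \<omega> in M. \<exists>T. Max ((\<lambda>i. \<bar>x T \<omega> i - J1\<bar>) ` S1) \<le> delta / alpha"
    with AE_noise show "AE \<omega> in M. limsup (\<lambda>t. ereal (Max ((\<lambda>i. \<bar>x t \<omega> i - J1\<bar>) ` S1)))
                                \<le> ereal (delta / alpha)"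
      by eventually_elim (use limsup1 in blast)
  next
    assume "AE \<omega> in M. \<exists>T. Max ((\<lambda>i. \<bar>x T \<omega> i - J2\<bar>) ` S2) \<le> delta / alpha"
    with AE_noise show "AE \<omega> in M. limsup (\<lambda>t. ereal (Max ((\<lambda>i. \<bar>x t \<omega> i - J2\<bar>) ` S2)))
                                \<le> ereal (delta / alpha)"
      by eventually_elim (use limsup2 in blast)
  qed
qed

end
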